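(* For every nonzero $a\in\mathcal F^0(\mathbb Z,\bar K)$ there exists an integer $m_a>0$, depending only on $a$, such that every function $f:\mathbb Z\to\bar K$ with $f*a=0$ is $m_a$-periodic. Consequently $\ker(\Delta_a)$ is contained in the space of $m_a\mathbb Z$-periodic functions on $\mathbb Z$ and is finite dimensional.
   Context: $K=\mathrm{GF}(p^r)$, $\bar K$ an algebraic closure. $\mathcal F^0(\mathbb Z,\bar K)$ is the space of finitely supported functions $\mathbb Z\to\bar K$; $(f*a)(n)=\sum_{k}f(k)a(n-k)$; $\Delta_af=f*a$ on all functions $\mathbb Z\to\bar K$. *)

theory Defs
  imports "HOL-Algebra.Algebraic_Closure_Type" "HOL-Library.Function_Algebras"
begin

definition fin_supp :: "(int \<Rightarrow> 'a::zero) \<Rightarrow> bool" where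
  "fin_supp a \<longleftrightarrow> finite {k. a k \<noteq> 0}"

text \<open>Convolution (f * a)(n) = sum_k f(k) a(n-k); for finitely supported a the
  sum ranges over the finitely many k with a(n-k) nonzero.\<close>
definition conv :: "(int \<Rightarrow> 'a::comm_ring_1) \<Rightarrow> (int \<Rightarrow> 'a) \<Rightarrow> int \<Rightarrow> 'a" where
  "conv f a n = (\<Sum>k\<in>{k. a (n - k) \<noteq> 0}. f k * a (n - k))"

definition Delta :: "(int \<Rightarrow> 'a::comm_ring_1) \<Rightarrow> (int \<Rightarrow> 'a) \<Rightarrow> (int \<Rightarrow> 'a)" where
  "Delta a f = conv f a"

definition periodic_with :: "int \<Rightarrow> (int \<Rightarrow> 'a) \<Rightarrow> bool" where
  "periodic_with m f \<longleftrightarrow> (\<forall>n. f (n + m) = f n)"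

definition fscale :: "'a::comm_ring_1 \<Rightarrow> (int \<Rightarrow> 'a) \<Rightarrow> (int \<Rightarrow> 'a)" where
  "fscale c f = (\<lambda>n. c * f n)"

end

theory Submission
  imports Defs
begin

(* Let a be supported in [s, t]. Then (f * a)(n + t) = A(E) f (n), where E is the shift
   and A has the coefficients a(t), a(t - 1), ..., a(s), so A(0) = a(t) is nonzero.
   Over the algebraic closure of a finite field of characteristic p every root b of A is
   nonzero, hence a root of unity, b^k = 1.  Splitting off a factor E - b: if
   g = f(. + 1) - b f is m-periodic, then h = f(. + m) - f satisfies h(. + 1) = b h, so h
   is km-periodic; then D = f(. + km) - f is km-periodic too, so f(n + j km) = f(n) + j D(n),
   and j = p gives the period pkm.  Induction on the degree of A yields a period of f, and
   an m-periodic f is a combination of the m indicator functions of the residue classes. *)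

lemma finite_polys_degree_le: "finite {p :: 'a::{zero,finite} poly. degree p \<le> n}"
proof (rule finite_subset)
  show "{p :: 'a poly. degree p \<le> n} \<subseteq> Poly ` {cs. set cs \<subseteq> UNIV \<and> length cs \<le> Suc n}"
  proof
    fix p :: "'a poly"
    assume "p \<in> {p. degree p \<le> n}"
    then have "length (coeffs p) \<le> Suc n"
      by (cases "p = 0") (auto simp: length_coeffs)
    then show "p \<in> Poly ` {cs. set cs \<subseteq> UNIV \<and> length cs \<le> Suc n}"
      by (intro image_eqI[of _ _ "coeffs p"]) auto
  qed
  show "finite (Poly ` {cs :: 'a list. set cs \<subseteq> UNIV \<and> length cs \<le> Suc n})"
    by (intro finite_imageI finite_lists_length_le) simp
qed

lemma map_poly_to_ac_add: "map_poly to_ac (p + q) = map_poly to_ac p + map_poly to_ac q"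
  by (rule poly_eqI) (simp add: coeff_map_poly)

lemma map_poly_to_ac_mult: "map_poly to_ac (p * q) = map_poly to_ac p * map_poly to_ac q"
  by (rule poly_eqI) (simp add: coeff_map_poly coeff_mult to_ac_sum)

lemma alg_closure_root_of_unity:
  fixes x :: "'k::{field,finite} alg_closure"
  assumes "x \<noteq> 0"
  shows "\<exists>k>0. x ^ k = 1"
proof -
  obtain P :: "'k poly" where P: "P \<noteq> 0" "poly (map_poly to_ac P) x = 0"
    by (rule alg_closure_algebraic)
  define ev where "ev q = poly (map_poly to_ac q) x" for q :: "'k poly"
  \<comment> \<open>x ^ n only depends on X ^ n mod P, which ranges over a finite set\<close>
  define R where "R n = monom 1 n mod P" for n
  have pow_eq: "x ^ n = ev (R n)" for n
  proof -
    have "monom 1 n = monom 1 n div P * P + R n"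
      unfolding R_def by simp
    then have "ev (monom 1 n) = ev (monom 1 n div P) * ev P + ev (R n)"
      unfolding ev_def by (metis map_poly_to_ac_add map_poly_to_ac_mult poly_add poly_mult)
    then show ?thesis
      using P(2) by (simp add: ev_def map_poly_monom poly_monom)
  qed
  have "degree (R n) \<le> degree P" for n
    using degree_mod_less[OF P(1), of "monom 1 n"] unfolding R_def by auto
  then have "range R \<subseteq> {q. degree q \<le> degree P}"
    by blast
  then have "finite (range R)"
    using finite_polys_degree_le finite_subset by blast
  then have "\<not> inj R"
    using finite_imageD infinite_UNIV_nat by blast
  then obtain i j where "i \<noteq> j" "R i = R j"
    unfolding inj_def by blast
  then obtain i j where ij: "i < j" "x ^ i = x ^ j"
    using pow_eq by (metis linorder_neqE_nat)
  have "x ^ i * x ^ (j - i) = x ^ j"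
    using ij(1) by (simp flip: power_add)
  then have "x ^ i * x ^ (j - i) = x ^ i * 1"
    using ij(2) by simp
  then have "x ^ (j - i) = 1"
    using assms by simp
  then show ?thesis
    using ij(1) by (intro exI[of _ "j - i"]) simp
qed

definition shift_op :: "'a::comm_ring_1 poly \<Rightarrow> (int \<Rightarrow> 'a) \<Rightarrow> int \<Rightarrow> 'a" where
  "shift_op P f n = (\<Sum>i\<le>degree P. coeff P i * f (n + int i))"

lemma shift_op_eq_sum:
  assumes "degree P \<le> N"
  shows "shift_op P f n = (\<Sum>i\<le>N. coeff P i * f (n + int i))"
  unfolding shift_op_def using assms
  by (intro sum.mono_neutral_left) (auto simp: coeff_eq_0)

lemma shift_op_linear_factor:
  "shift_op ([:-c, 1:] * Q) f = shift_op Q (\<lambda>n. f (n + 1) - c * f n)"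
proof
  fix n
  let ?N = "Suc (degree Q)"
  have "degree ([:-c, 1:] * Q) \<le> ?N"
    using degree_mult_le[of "[:-c, 1:]" Q] by simp
  then have "shift_op ([:-c, 1:] * Q) f n
      = (\<Sum>i\<le>?N. - c * coeff Q i * f (n + int i)) + (\<Sum>i\<le>?N. coeff (pCons 0 Q) i * f (n + int i))"
    by (simp add: shift_op_eq_sum sum.distrib[symmetric] algebra_simps)
  also have "(\<Sum>i\<le>?N. - c * coeff Q i * f (n + int i)) = (\<Sum>i\<le>degree Q. - c * coeff Q i * f (n + int i))"
    by (simp add: coeff_eq_0)
  also have "(\<Sum>i\<le>?N. coeff (pCons 0 Q) i * f (n + int i)) = (\<Sum>i\<le>degree Q. coeff Q i * f (n + 1 + int i))"
    by (subst sum.atMost_Suc_shift) (simp add: add_ac)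
  also have "(\<Sum>i\<le>degree Q. - c * coeff Q i * f (n + int i)) + (\<Sum>i\<le>degree Q. coeff Q i * f (n + 1 + int i))
      = shift_op Q (\<lambda>n. f (n + 1) - c * f n) n"
    by (simp add: shift_op_def sum.distrib[symmetric] algebra_simps)
  finally show "shift_op ([:-c, 1:] * Q) f n = shift_op Q (\<lambda>n. f (n + 1) - c * f n) n" .
qed

lemma periodic_with_mult:
  assumes "periodic_with m f"
  shows "periodic_with (z * m) f"
proof -
  have nat_mult: "f (n + int j * m) = f n" for n j
  proof (induction j)
    case (Suc j)
    have "f (n + int (Suc j) * m) = f ((n + int j * m) + m)"
      by (simp add: algebra_simps)
    with Suc assms show ?case
      unfolding periodic_with_def by simp
  qed simp
  have "f (n + z * m) = f n" for n
  proof (cases "z \<ge> 0")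
    case True
    then show ?thesis
      using nat_mult[of n "nat z"] by simp
  next
    case False
    then show ?thesis
      using nat_mult[of "n + z * m" "nat (- z)"] by (simp add: algebra_simps)
  qed
  then show ?thesis
    unfolding periodic_with_def by simp
qed

lemma periodic_with_if_geometric:
  fixes h :: "int \<Rightarrow> 'a::monoid_mult"
  assumes "\<And>n. h (n + 1) = c * h n" and "c ^ k = 1"
  shows "periodic_with (int k) h"
proof -
  have "h (n + int j) = c ^ j * h n" for n j
  proof (induction j)
    case (Suc j)
    have "h (n + int (Suc j)) = h ((n + int j) + 1)"
      by (simp add: ac_simps)
    also have "\<dots> = c * h (n + int j)"
      by (rule assms(1))
    finally show ?case
      using Suc by (simp add: mult.assoc)
  qed simp
  then show ?thesis
    using assms(2) unfolding periodic_with_def by simp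
qed

lemma periodic_with_multiple_difference:
  fixes f :: "int \<Rightarrow> 'a::ab_group_add"
  assumes "periodic_with P (\<lambda>n. f (n + m) - f n)"
  shows "periodic_with P (\<lambda>n. f (n + int j * m) - f n)"
proof (induction j)
  case 0
  show ?case
    by (simp add: periodic_with_def)
next
  case (Suc j)
  show ?case
    unfolding periodic_with_def
  proof
    fix n
    have "f (n + P + int (Suc j) * m) - f (n + P)
        = (f (n + P + int j * m) - f (n + P)) + (f (n + int j * m + P + m) - f (n + int j * m + P))"
      by (simp add: algebra_simps)
    also have "\<dots> = (f (n + int j * m) - f n) + (f (n + int j * m + m) - f (n + int j * m))"
      using Suc.IH assms unfolding periodic_with_def by simp
    also have "\<dots> = f (n + int (Suc j) * m) - f n"
      by (simp add: algebra_simps)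
    finally show "f (n + P + int (Suc j) * m) - f (n + P) = f (n + int (Suc j) * m) - f n" .
  qed
qed

lemma periodic_with_CHAR_mult:
  fixes f :: "int \<Rightarrow> 'a::comm_ring_1"
  assumes "periodic_with m (\<lambda>n. f (n + m) - f n)"
  shows "periodic_with (int CHAR('a) * m) f"
proof -
  have "f (n + int j * m) = f n + of_nat j * (f (n + m) - f n)" for n j
  proof (induction j)
    case (Suc j)
    have "f (n + int (Suc j) * m) = f (n + int j * m) + (f (n + int j * m + m) - f (n + int j * m))"
      by (simp add: algebra_simps)
    also have "f (n + int j * m + m) - f (n + int j * m) = f (n + m) - f n"
      using periodic_with_mult[OF assms, of "int j"] unfolding periodic_with_def by simp
    also have "f (n + int j * m) + (f (n + m) - f n) = f n + of_nat (Suc j) * (f (n + m) - f n)"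
      using Suc by (simp add: algebra_simps)
    finally show ?case .
  qed simp
  from this[of _ "CHAR('a)"] show ?thesis
    unfolding periodic_with_def by simp
qed

lemma periodic_with_if_twisted_difference_periodic:
  fixes f :: "int \<Rightarrow> 'a::comm_ring_1"
  assumes "periodic_with m (\<lambda>n. f (n + 1) - c * f n)" and "c ^ k = 1"
  shows "periodic_with (int CHAR('a) * (int k * m)) f"
proof -
  define h where "h = (\<lambda>n. f (n + m) - f n)"
  have "h (n + 1) - c * h n = (f (n + m + 1) - c * f (n + m)) - (f (n + 1) - c * f n)" for n
    by (simp add: h_def algebra_simps)
  also have "\<dots> n = 0" for n
    using assms(1) unfolding periodic_with_def by simp
  finally have "h (n + 1) = c * h n" for n
    by simp
  then have "periodic_with (int k) h"
    using assms(2) by (rule periodic_with_if_geometric)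
  then have "periodic_with (int k * m) (\<lambda>n. f (n + m) - f n)"
    using periodic_with_mult[of "int k" h m] unfolding h_def by (simp add: mult.commute)
  then have "periodic_with (int k * m) (\<lambda>n. f (n + int k * m) - f n)"
    by (rule periodic_with_multiple_difference)
  then show ?thesis
    by (rule periodic_with_CHAR_mult)
qed

lemma shift_op_kernel_periodic:
  fixes A :: "'a::alg_closed_field poly"
  assumes "poly A 0 \<noteq> 0" and "CHAR('a) > 0"
    and roots_of_unity: "\<And>x::'a. x \<noteq> 0 \<Longrightarrow> \<exists>k>0. x ^ k = 1"
  shows "\<exists>m>0. \<forall>f. shift_op A f = (\<lambda>_. 0) \<longrightarrow> periodic_with m f"
  using assms(1)
proof (induction "degree A" arbitrary: A rule: less_induct)
  case less
  show ?case
  proof (cases "degree A = 0")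
    case True
    then obtain c where A: "A = [:c:]" and "c \<noteq> 0"
      using less.prems by (metis degree_eq_zeroE poly_const_conv)
    have "periodic_with 1 f" if "shift_op A f = (\<lambda>_. 0)" for f
    proof -
      have "f n = 0" for n
        using that \<open>c \<noteq> 0\<close> by (auto simp: A shift_op_def fun_eq_iff)
      then show ?thesis
        by (simp add: periodic_with_def)
    qed
    then show ?thesis
      by (intro exI[of _ 1]) simp
  next
    case False
    then obtain c where "poly A c = 0"
      using alg_closed_imp_poly_has_root by blast
    then obtain Q where A: "A = [:-c, 1:] * Q"
      by (metis dvdE poly_eq_0_iff_dvd)
    have "poly A 0 = - c * poly Q 0"
      by (simp add: A)
    then have "c \<noteq> 0" and "poly Q 0 \<noteq> 0"
      using less.prems by auto
    then have "Q \<noteq> 0"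
      by auto
    then have "degree A = degree [:-c, 1:] + degree Q"
      unfolding A by (intro degree_mult_eq) simp_all
    then have "degree Q < degree A"
      by simp
    then obtain m where "m > 0" and periodic_Q: "\<forall>g. shift_op Q g = (\<lambda>_. 0) \<longrightarrow> periodic_with m g"
      using less.hyps \<open>poly Q 0 \<noteq> 0\<close> by blast
    obtain k where "k > 0" "c ^ k = 1"
      using roots_of_unity \<open>c \<noteq> 0\<close> by blast
    have "periodic_with (int CHAR('a) * (int k * m)) f" if "shift_op A f = (\<lambda>_. 0)" for f
    proof (rule periodic_with_if_twisted_difference_periodic)
      show "periodic_with m (\<lambda>n. f (n + 1) - c * f n)"
        using periodic_Q that unfolding A shift_op_linear_factor by blast
    qed fact
    moreover have "int CHAR('a) * (int k * m) > 0"
      using \<open>m > 0\<close> \<open>k > 0\<close> assms(2) by simp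
    ultimately show ?thesis
      by blast
  qed
qed

definition window_poly :: "(int \<Rightarrow> 'a::comm_ring_1) \<Rightarrow> int \<Rightarrow> int \<Rightarrow> 'a poly" where
  "window_poly a s t = (\<Sum>j\<le>nat (t - s). monom (a (t - int j)) j)"

lemma coeff_window_poly:
  "coeff (window_poly a s t) j = (if j \<le> nat (t - s) then a (t - int j) else 0)"
  by (simp add: window_poly_def coeff_sum)

lemma conv_eq_shift_op_window_poly:
  assumes supp: "\<And>k. a k \<noteq> 0 \<Longrightarrow> s \<le> k \<and> k \<le> t"
  shows "conv f a (n + t) = shift_op (window_poly a s t) f n"
proof -
  have "degree (window_poly a s t) \<le> nat (t - s)"
    by (rule degree_le) (simp add: coeff_window_poly)
  then have "shift_op (window_poly a s t) f n = (\<Sum>j\<le>nat (t - s). a (t - int j) * f (n + int j))"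
    by (simp add: shift_op_eq_sum coeff_window_poly)
  also have "\<dots> = (\<Sum>k\<in>(\<lambda>j. n + int j) ` {..nat (t - s)}. f k * a (n + t - k))"
    by (subst sum.reindex) (auto simp: inj_on_def algebra_simps)
  also have "\<dots> = (\<Sum>k\<in>{k. a (n + t - k) \<noteq> 0}. f k * a (n + t - k))"
  proof (rule sum.mono_neutral_right)
    show "{k. a (n + t - k) \<noteq> 0} \<subseteq> (\<lambda>j. n + int j) ` {..nat (t - s)}"
    proof
      fix k
      assume "k \<in> {k. a (n + t - k) \<noteq> 0}"
      then have "0 \<le> k - n" "k - n \<le> t - s"
        using supp[of "n + t - k"] by auto
      then show "k \<in> (\<lambda>j. n + int j) ` {..nat (t - s)}"
        by (intro image_eqI[of _ _ "nat (k - n)"]) auto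
    qed
  qed auto
  finally show ?thesis
    by (simp add: conv_def)
qed

interpretation fun_module: Modules.module "fscale :: 'a::comm_ring_1 \<Rightarrow> (int \<Rightarrow> 'a) \<Rightarrow> _"
  by unfold_locales (auto simp: fscale_def fun_eq_iff algebra_simps)

lemma periodic_in_span_residue_indicators:
  fixes f :: "int \<Rightarrow> 'a::comm_ring_1"
  assumes "m > 0" and "periodic_with m f"
  shows "f \<in> module.span fscale ((\<lambda>j n. if n mod m = j then 1 else 0) ` {0..<m})"
proof -
  define e :: "int \<Rightarrow> int \<Rightarrow> 'a" where "e j n = (if n mod m = j then 1 else 0)" for j n
  have sum_apply: "(\<Sum>j\<in>J. g j) n = (\<Sum>j\<in>J. g j n)" for J and g :: "int \<Rightarrow> int \<Rightarrow> 'a" and n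
    by (induction J rule: infinite_finite_induct) auto
  have "f = (\<Sum>j\<in>{0..<m}. fscale (f j) (e j))"
  proof
    fix n
    have "(\<Sum>j\<in>{0..<m}. fscale (f j) (e j)) n = (\<Sum>j\<in>{0..<m}. if j = n mod m then f j else 0)"
      unfolding sum_apply fscale_def e_def by (intro sum.cong) auto
    also have "\<dots> = f (n mod m)"
      using assms(1) by simp
    also have "\<dots> = f n"
      using periodic_with_mult[OF assms(2), of "n div m", unfolded periodic_with_def, rule_format, of "n mod m"]
      by simp
    finally show "f n = (\<Sum>j\<in>{0..<m}. fscale (f j) (e j)) n"
      by simp
  qed
  also have "\<dots> \<in> module.span fscale (e ` {0..<m})"
    by (intro fun_module.span_sum fun_module.span_scale fun_module.span_base) auto
  finally show ?thesis
    by (simp add: e_def[abs_def])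
qed

theorem lemma5p6:
  fixes p r :: nat
    and a :: "int \<Rightarrow> ('k::{field,finite}) alg_closure"
  assumes "prime p" and "r > 0" and "card (UNIV :: 'k set) = p ^ r"
    and "fin_supp a" and "a \<noteq> (\<lambda>_. 0)"
  shows "\<exists>m::int. m > 0 \<and>
           (\<forall>f. conv f a = (\<lambda>_. 0) \<longrightarrow> periodic_with m f) \<and>
           {f. Delta a f = (\<lambda>_. 0)} \<subseteq> {f. periodic_with m f} \<and>
           (\<exists>B. finite B \<and> {f. Delta a f = (\<lambda>_. 0)} \<subseteq> module.span fscale B)"
proof -
  \<comment> \<open>only the finiteness of 'k is used, not its order p ^ r\<close>
  define S where "S = {k. a k \<noteq> 0}"
  have "finite S" and "S \<noteq> {}"
    using assms(4,5) by (auto simp: S_def fin_supp_def)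
  define A where "A = window_poly a (Min S) (Max S)"
  have conv_A: "conv f a (n + Max S) = shift_op A f n" for f n
    unfolding A_def using \<open>finite S\<close> by (intro conv_eq_shift_op_window_poly) (auto simp: S_def)
  have "poly A 0 = a (Max S)"
    by (simp add: A_def poly_0_coeff_0 coeff_window_poly)
  also have "\<dots> \<noteq> 0"
    using Max_in[OF \<open>finite S\<close> \<open>S \<noteq> {}\<close>] by (simp add: S_def)
  finally have "poly A 0 \<noteq> 0" .
  moreover have "CHAR('k alg_closure) > 0"
    by (simp add: finite_imp_CHAR_pos)
  ultimately obtain m where "m > 0" and periodic_A: "\<forall>f. shift_op A f = (\<lambda>_. 0) \<longrightarrow> periodic_with m f"
    using shift_op_kernel_periodic alg_closure_root_of_unity by blast
  have kernel_periodic: "periodic_with m f" if "conv f a = (\<lambda>_. 0)" for f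
    using periodic_A conv_A that by metis
  define B :: "(int \<Rightarrow> 'k alg_closure) set"
    where "B = (\<lambda>j n. if n mod m = j then 1 else 0) ` {0..<m}"
  have "{f. Delta a f = (\<lambda>_. 0)} \<subseteq> module.span fscale B"
    unfolding B_def using kernel_periodic periodic_in_span_residue_indicators \<open>m > 0\<close>
    by (auto simp: Delta_def)
  then show ?thesis
    using \<open>m > 0\<close> kernel_periodic unfolding Delta_def
    by (intro exI[of _ m] conjI exI[of _ B]) (auto simp: B_def)
qed

end
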